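(* Let $\mathbf{K}_{\mathbf{x}\mathbf{x}}\in\mathbb{R}^{K\times K}$ be a (symmetric positive semidefinite) covariance matrix. For any $d>0$ and any full-rank $\mathbf{A}\in\mathbb{Z}^{K\times K}$ with rows $\mathbf{a}_1^T,\ldots,\mathbf{a}_K^T$, $$\frac{1}{2}\log_2\Big(\max_{k=1,\ldots,K}\mathbf{a}_k^T\big(\mathbf{I}+\tfrac1d\mathbf{K}_{\mathbf{x}\mathbf{x}}\big)\mathbf{a}_k\Big)\ \ge\ \frac{1}{2K}\log_2\Big|\det\big(\mathbf{I}+\tfrac1d\mathbf{K}_{\mathbf{x}\mathbf{x}}\big)\Big|.$$ In particular, $R_{\text{IF}}(d)\ge R^{\text{BT}}_{\text{bench}}(d)$, where $R_{\text{IF}}(d)$ is the minimum of the left-hand side over full-rank integer $\mathbf{A}$ and $R^{\text{BT}}_{\text{bench}}(d)$ is the right-hand side. *)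

theory Defs
  imports "HOL-Analysis.Analysis"
begin

definition integer_matrix :: "real^'n^'m \<Rightarrow> bool" where
  "integer_matrix A \<longleftrightarrow> (\<forall>i j. A $ i $ j \<in> \<int>)"

definition psd_matrix :: "real^'n^'n \<Rightarrow> bool" where
  "psd_matrix M \<longleftrightarrow> transpose M = M \<and> (\<forall>x. 0 \<le> x \<bullet> (M *v x))"

definition if_rate_A :: "real^'n^'n \<Rightarrow> real \<Rightarrow> real^'n^'n \<Rightarrow> real" where
  "if_rate_A Kxx d A =
     1/2 * log 2 (Max (range (\<lambda>k. row k A \<bullet> ((mat 1 + (1/d) *\<^sub>R Kxx) *v row k A))))"

definition R_IF :: "real^'n^'n \<Rightarrow> real \<Rightarrow> real" where
  "R_IF Kxx d = Inf {if_rate_A Kxx d A | A. integer_matrix A \<and> rank A = CARD('n)}"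

definition R_bench_BT :: "real^'n^'n \<Rightarrow> real \<Rightarrow> real" where
  "R_bench_BT Kxx d = 1 / (2 * real CARD('n)) * log 2 \<bar>det (mat 1 + (1/d) *\<^sub>R Kxx)\<bar>"

end

theory Submission
  imports Defs
begin

text \<open>Since \<open>A\<close> is a nonsingular integer matrix, \<open>det (A M A\<^sup>T) = (det A)\<^sup>2 det M \<ge> det M\<close>,
  where \<open>M = I + K\<^sub>x\<^sub>x/d\<close>. Hadamard's inequality for the Gram matrix \<open>A M A\<^sup>T\<close> bounds its determinant
  by the product of its diagonal entries \<open>a\<^sub>k\<^sup>T M a\<^sub>k\<close>, hence by the \<open>n\<close>-th power of their maximum (\<open>n\<close> the dimension);
  taking logarithms gives the claim. Hadamard's inequality is proved extremally: among matrices
  whose rows have unit \<open>M\<close>-length, one of maximal \<open>|det|\<close> has \<open>M\<close>-orthogonal rows, since otherwise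
  a shear followed by rescaling a row would increase \<open>|det|\<close>; for it \<open>W M W\<^sup>T = I\<close>.\<close>

lemma matrix_mult_transpose_nth:
  fixes W M :: "real^'n^'n"
  shows "(W ** M ** transpose W) $ i $ j = W$i \<bullet> (M *v W$j)"
proof -
  have "(W ** M ** transpose W) $ i $ j = (\<Sum>k\<in>UNIV. \<Sum>l\<in>UNIV. W$i$l * (M$l$k * W$j$k))"
    by (simp add: matrix_matrix_mult_def transpose_def sum_distrib_right mult.assoc)
  also have "\<dots> = (\<Sum>l\<in>UNIV. \<Sum>k\<in>UNIV. W$i$l * (M$l$k * W$j$k))"
    by (rule sum.swap)
  also have "\<dots> = W$i \<bullet> (M *v W$j)"
    by (simp add: inner_vec_def matrix_vector_mult_def sum_distrib_left)
  finally show ?thesis .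
qed

lemma inner_matrix_vector_symmetric:
  fixes M :: "real^'n^'n"
  assumes "transpose M = M"
  shows "x \<bullet> (M *v y) = y \<bullet> (M *v x)"
  by (metis assms dot_lmul_matrix vector_transpose_matrix inner_commute)

lemma continuous_on_det: "continuous_on S (det :: real^'n^'n \<Rightarrow> real)"
  unfolding det_def by (intro continuous_intros)

lemma integer_matrix_det_Ints:
  fixes A :: "real^'n^'n"
  assumes "integer_matrix A"
  shows "det A \<in> \<int>"
  using assms unfolding det_def integer_matrix_def
  by (intro Ints_sum Ints_mult Ints_prod) (auto simp: sign_def)

lemma integer_matrix_full_rank_det_square_ge_1:
  fixes A :: "real^'n^'n"
  assumes "integer_matrix A" and "rank A = CARD('n)"
  shows "1 \<le> (det A)\<^sup>2"
proof -
  have "det A \<noteq> 0" using assms(2) det_eq_0_rank[of A] by simp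
  then have "1 \<le> \<bar>det A\<bar>" using integer_matrix_det_Ints[OF assms(1)] Ints_nonzero_abs_ge1 by blast
  then show ?thesis by (metis abs_le_square_iff abs_one one_power2)
qed

locale symmetric_matrix_ge_id =
  fixes M :: "real^'n^'n"
  assumes symmetric: "transpose M = M"
    and ge_id: "\<And>x. x \<bullet> x \<le> x \<bullet> (M *v x)"
begin

definition form :: "real^'n \<Rightarrow> real" where
  "form x = x \<bullet> (M *v x)"

definition unit_rows :: "(real^'n^'n) set" where
  "unit_rows = {W. \<forall>i. form (W$i) = 1}"

lemma form_nonneg: "0 \<le> form x"
  using ge_id[of x] unfolding form_def by (meson inner_ge_zero order_trans)

lemma form_pos: "x \<noteq> 0 \<Longrightarrow> 0 < form x"
  using ge_id[of x] unfolding form_def by (meson inner_gt_zero_iff order_less_le_trans)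

lemma form_scaleR: "form (c *\<^sub>R x) = c\<^sup>2 * form x"
  by (simp add: form_def matrix_vector_mult_scaleR power2_eq_square)

lemma form_shear:
  assumes "form x = 1" and "form y = 1"
  shows "form (x - (x \<bullet> (M *v y)) *\<^sub>R y) = 1 - (x \<bullet> (M *v y))\<^sup>2"
  using assms inner_matrix_vector_symmetric[OF symmetric, of y x]
  by (simp add: form_def power2_eq_square algebra_simps)

lemma det_normalize_rows:
  fixes V :: "real^'n^'n"
  assumes "\<And>i. V$i \<noteq> 0"
  defines "W \<equiv> \<chi> i. (1 / sqrt (form (V$i))) *\<^sub>R V$i"
  shows "W \<in> unit_rows" and "det V = (\<Prod>i\<in>UNIV. sqrt (form (V$i))) * det W"
proof -
  have pos: "0 < form (V$i)" for i using form_pos[OF assms(1)] .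
  have form_nz: "form (V$i) \<noteq> 0" and form_ge0: "0 \<le> form (V$i)" for i using pos[of i] by auto
  then show "W \<in> unit_rows"
    unfolding unit_rows_def W_def by (simp add: form_scaleR power_divide)
  have "V = (\<chi> i. sqrt (form (V$i)) *s W$i)"
    using form_nz form_ge0 unfolding W_def by (simp add: vec_eq_iff scalar_mult_eq_scaleR)
  then show "det V = (\<Prod>i\<in>UNIV. sqrt (form (V$i))) * det W"
    using det_rows_mul[of "\<lambda>i. sqrt (form (V$i))" "\<lambda>i. W$i"] by simp
qed

lemma compact_unit_rows: "compact unit_rows"
proof (rule compact_eq_bounded_closed[THEN iffD2], rule conjI)
  show "bounded unit_rows"
  proof (rule boundedI)
    fix W assume W: "W \<in> unit_rows"
    have "norm (W$i) \<le> 1" for i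
    proof -
      have "(norm (W$i))\<^sup>2 \<le> 1" using ge_id[of "W$i"] W
        by (simp add: unit_rows_def form_def power2_norm_eq_inner)
      then show ?thesis by (simp add: abs_square_le_1)
    qed
    then have "(\<Sum>i\<in>UNIV. norm (W$i)) \<le> (\<Sum>i\<in>(UNIV::'n set). 1)" by (intro sum_mono)
    moreover have "norm W \<le> (\<Sum>i\<in>UNIV. norm (W$i))"
      unfolding norm_vec_def by (rule L2_set_le_sum) simp
    ultimately show "norm W \<le> real CARD('n)" by simp
  qed
  have "continuous_on UNIV (\<lambda>W::real^'n^'n. form (W$i))" for i
    unfolding form_def
    by (intro continuous_intros
        continuous_on_compose2[OF matrix_vector_mult_linear_continuous_on, where t=UNIV]) auto
  then have "closed {W::real^'n^'n. form (W$i) = 1}" for i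
    by (intro closed_Collect_eq continuous_intros)
  moreover have "unit_rows = (\<Inter>i. {W. form (W$i) = 1})" unfolding unit_rows_def by auto
  ultimately show "closed unit_rows" by auto
qed

lemma unit_rows_det_nonzero: "\<exists>W\<in>unit_rows. det W \<noteq> 0"
proof -
  have "(mat 1 :: real^'n^'n) $ i \<noteq> 0" for i by (simp add: vec_eq_iff mat_def)
  from det_normalize_rows[OF this] show ?thesis by force
qed

lemma det_maximizer_exists:
  obtains W0 where "W0 \<in> unit_rows" and "\<And>W. W \<in> unit_rows \<Longrightarrow> \<bar>det W\<bar> \<le> \<bar>det W0\<bar>"
    and "det W0 \<noteq> 0"
proof -
  have "unit_rows \<noteq> {}" using unit_rows_det_nonzero by blast
  from continuous_attains_sup[OF compact_unit_rows this, of "\<lambda>W. \<bar>det W\<bar>"]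
  obtain W0 where "W0 \<in> unit_rows" "\<And>W. W \<in> unit_rows \<Longrightarrow> \<bar>det W\<bar> \<le> \<bar>det W0\<bar>"
    using continuous_on_rabs[OF continuous_on_det] by blast
  moreover from this(2) have "det W0 \<noteq> 0" using unit_rows_det_nonzero by force
  ultimately show ?thesis using that by blast
qed

lemma det_increase_if_not_orthogonal:
  assumes W0: "W0 \<in> unit_rows" "det W0 \<noteq> 0"
    and ij: "i \<noteq> j" and c: "W0$i \<bullet> (M *v W0$j) \<noteq> 0"
  shows "\<exists>W\<in>unit_rows. \<bar>det W0\<bar> < \<bar>det W\<bar>"
proof -
  define c where "c = W0$i \<bullet> (M *v W0$j)"
  define u where "u = W0$i - c *\<^sub>R W0$j"
  have form_u: "form u = 1 - c\<^sup>2"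
    using W0(1) unfolding u_def c_def unit_rows_def by (simp add: form_shear)
  have "(\<chi> k. if k = i then u else W0$k) =
        (\<chi> k. if k = i then row i W0 + (-c) *s row j W0 else row k W0)"
    by (simp add: u_def vec_eq_iff row_def scalar_mult_eq_scaleR)
  then have det_shear: "det (\<chi> k. if k = i then u else W0$k) = det W0"
    using det_row_operation[OF ij, of W0 "-c"] by simp
  have "u \<noteq> 0"
  proof
    assume "u = 0"
    then have "det (\<chi> k. if k = i then u else W0$k) = 0"
      by (intro det_zero_row(1)[of i]) (simp add: row_def vec_eq_iff)
    with det_shear W0(2) show False by simp
  qed
  then have s_pos: "0 < sqrt (1 - c\<^sup>2)" using form_pos[of u] form_u by simp
  have s_lt1: "sqrt (1 - c\<^sup>2) < 1" using c s_pos by (simp add: c_def)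
  define W where "W = (\<chi> k. if k = i then (1 / sqrt (1 - c\<^sup>2)) *s u else W0$k)"
  have "W \<in> unit_rows"
    using W0(1) s_pos form_u
    by (auto simp: unit_rows_def W_def scalar_mult_eq_scaleR form_scaleR power_divide)
  moreover have "det W = (1 / sqrt (1 - c\<^sup>2)) * det (\<chi> k. if k = i then u else W0$k)"
    unfolding W_def by (rule det_row_mul)
  then have "det W = det W0 / sqrt (1 - c\<^sup>2)" using det_shear by simp
  then have "\<bar>det W0\<bar> < \<bar>det W\<bar>"
    using W0(2) s_pos s_lt1 by (simp add: less_divide_eq)
  ultimately show ?thesis by blast
qed

lemma det_square_mult_det_le_1:
  shows "0 < det M" and "\<And>W. W \<in> unit_rows \<Longrightarrow> (det W)\<^sup>2 * det M \<le> 1"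
proof -
  obtain W0 where W0: "W0 \<in> unit_rows" "\<And>W. W \<in> unit_rows \<Longrightarrow> \<bar>det W\<bar> \<le> \<bar>det W0\<bar>"
      "det W0 \<noteq> 0"
    using det_maximizer_exists by blast
  have orthogonal: "W0$i \<bullet> (M *v W0$j) = 0" if "i \<noteq> j" for i j
    using det_increase_if_not_orthogonal[OF W0(1,3) that] W0(2) by fastforce
  have "W0 ** M ** transpose W0 = mat 1"
    using W0(1) orthogonal
    by (simp add: vec_eq_iff matrix_mult_transpose_nth mat_def unit_rows_def form_def)
  then have det_W0: "(det W0)\<^sup>2 * det M = 1"
    using det_mul[of "W0 ** M" "transpose W0"] by (simp add: det_mul power2_eq_square algebra_simps)
  moreover have "0 < (det W0)\<^sup>2" using W0(3) by simp
  ultimately show "0 < det M" by (metis zero_less_one zero_less_mult_pos)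
  fix W assume "W \<in> unit_rows"
  then have "(det W)\<^sup>2 \<le> (det W0)\<^sup>2" using W0(2) by (simp add: abs_le_square_iff)
  then show "(det W)\<^sup>2 * det M \<le> 1" using \<open>0 < det M\<close> det_W0 by (metis mult_right_mono less_imp_le)
qed

theorem hadamard_inequality: "(det V)\<^sup>2 * det M \<le> (\<Prod>i\<in>UNIV. form (V$i))"
proof (cases "\<exists>i. V$i = 0")
  case True
  then have "det V = 0" by (metis det_zero_row(1) row_def vec_lambda_eta)
  then show ?thesis by (simp add: prod_nonneg form_nonneg)
next
  case False
  define W where "W \<equiv> \<chi> i. (1 / sqrt (form (V$i))) *\<^sub>R V$i"
  have W: "W \<in> unit_rows" and det_V: "det V = (\<Prod>i\<in>UNIV. sqrt (form (V$i))) * det W"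
    using det_normalize_rows False unfolding W_def by auto
  have "(\<Prod>i\<in>UNIV. sqrt (form (V$i)))\<^sup>2 = (\<Prod>i\<in>UNIV. form (V$i))"
    by (simp add: prod_power_distrib form_nonneg)
  then have "(det V)\<^sup>2 * det M = (\<Prod>i\<in>UNIV. form (V$i)) * ((det W)\<^sup>2 * det M)"
    by (simp add: det_V power_mult_distrib)
  also have "\<dots> \<le> (\<Prod>i\<in>UNIV. form (V$i))"
    using det_square_mult_det_le_1(2)[OF W] by (simp add: mult_left_le prod_nonneg form_nonneg)
  finally show ?thesis .
qed

lemma log_det_le_log_max_form:
  fixes V :: "real^'n^'n"
  assumes "1 \<le> (det V)\<^sup>2"
  shows "1 / (2 * real CARD('n)) * log 2 \<bar>det M\<bar> \<le> 1/2 * log 2 (Max (range (\<lambda>k. form (V$k))))"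
proof -
  define Q where "Q = Max (range (\<lambda>k. form (V$k)))"
  have form_le_Q: "form (V$k) \<le> Q" for k unfolding Q_def by (rule Max_ge) auto
  have det_pos: "0 < det M" by (rule det_square_mult_det_le_1(1))
  have "det M \<le> (det V)\<^sup>2 * det M" using assms det_pos by simp
  also have "\<dots> \<le> (\<Prod>i\<in>UNIV. form (V$i))" by (rule hadamard_inequality)
  also have "\<dots> \<le> Q ^ CARD('n)"
    using prod_mono[of UNIV "\<lambda>i. form (V$i)" "\<lambda>_. Q"] by (simp add: form_nonneg form_le_Q)
  finally have det_le: "det M \<le> Q ^ CARD('n)" .
  have "0 \<le> Q" using form_le_Q form_nonneg order_trans by blast
  then have Q_pos: "0 < Q" using det_le det_pos by (cases "Q = 0") (auto simp: power_0_left)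
  have "log 2 (det M) \<le> log 2 (Q ^ CARD('n))" using det_le det_pos by simp
  then have "log 2 (det M) \<le> real CARD('n) * log 2 Q" using Q_pos by (simp add: log_nat_power)
  then show ?thesis unfolding Q_def[symmetric] using det_pos by (simp add: field_simps)
qed

end

lemma psd_matrix_id_plus_symmetric_matrix_ge_id:
  fixes K :: "real^'n^'n"
  assumes "psd_matrix K" and "d > 0"
  shows "symmetric_matrix_ge_id (mat 1 + (1/d) *\<^sub>R K)"
proof
  have "K $ j $ i = K $ i $ j" for i j
    using assms(1) unfolding psd_matrix_def by (metis transpose_def vec_lambda_beta)
  then show "transpose (mat 1 + (1/d) *\<^sub>R K) = mat 1 + (1/d) *\<^sub>R K"
    by (simp add: vec_eq_iff transpose_def mat_def)
  fix x :: "real^'n"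
  have "x \<bullet> ((mat 1 + (1/d) *\<^sub>R K) *v x) = x \<bullet> x + (1/d) * (x \<bullet> (K *v x))"
    by (simp add: matrix_vector_mult_add_rdistrib scaleR_matrix_vector_assoc[symmetric]
        inner_add_right)
  moreover have "0 \<le> x \<bullet> (K *v x)" using assms(1) by (simp add: psd_matrix_def)
  ultimately show "x \<bullet> x \<le> x \<bullet> ((mat 1 + (1/d) *\<^sub>R K) *v x)" using assms(2) by simp
qed

theorem lemma2:
  fixes Kxx :: "real^'n^'n" and d :: real
  assumes "psd_matrix Kxx" and "d > 0"
  shows "(\<forall>A :: real^'n^'n. integer_matrix A \<and> rank A = CARD('n) \<longrightarrow>
            1/2 * log 2 (Max (range (\<lambda>k. row k A \<bullet> ((mat 1 + (1/d) *\<^sub>R Kxx) *v row k A))))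
            \<ge> 1 / (2 * real CARD('n)) * log 2 \<bar>det (mat 1 + (1/d) *\<^sub>R Kxx)\<bar>)
         \<and> R_IF Kxx d \<ge> R_bench_BT Kxx d"
proof -
  interpret symmetric_matrix_ge_id "mat 1 + (1/d) *\<^sub>R Kxx"
    using psd_matrix_id_plus_symmetric_matrix_ge_id[OF assms] .
  have bound: "R_bench_BT Kxx d \<le> if_rate_A Kxx d A"
    if "integer_matrix A \<and> rank A = CARD('n)" for A :: "real^'n^'n"
    using log_det_le_log_max_form[OF integer_matrix_full_rank_det_square_ge_1[of A]] that
    by (simp add: R_bench_BT_def if_rate_A_def form_def row_def)
  have "integer_matrix (mat 1 :: real^'n^'n)" by (simp add: integer_matrix_def mat_def)
  with rank_I have "integer_matrix (mat 1 :: real^'n^'n) \<and> rank (mat 1 :: real^'n^'n) = CARD('n)"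
    by blast
  then have "R_bench_BT Kxx d \<le> R_IF Kxx d"
    unfolding R_IF_def using bound by (intro cInf_greatest) blast+
  with bound show ?thesis by (simp add: R_bench_BT_def if_rate_A_def)
qed

end
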